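(* Let $X$ and $Y$ be real Banach spaces. Then $(Lip_0(X,Y),Lip(\cdot))$ is isometrically isomorphic to $L(F_Y(X),Y)$, via the map $T\mapsto T\circ\delta_X^Y$.
   Context: $Lip_0(X,Y)$ is the Banach space of Lipschitz maps $f:X\to Y$ with $f(0)=0$ and norm $Lip(f)=\sup_{x\neq y}\|f(x)-f(y)\|/\|x-y\|$. For $x\in X$, $\delta_x^Y\in L(Lip_0(X,Y),Y)$ is evaluation $\delta_x^Y(f)=f(x)$, and $\delta_X^Y:X\to L(Lip_0(X,Y),Y)$ is the map $x\mapsto\delta_x^Y$. $F_Y(X)$ is the norm-closed linear span of $\{\delta_x^Y:x\in X\}$ in $L(Lip_0(X,Y),Y)$ with operator norm; $L(F_Y(X),Y)$ carries the operator norm. *)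

theory Defs
  imports "HOL-Analysis.Analysis"
begin

text \<open>Lipschitz constant Lip(f) = sup of norm (f x - f y) / norm (x - y) over x \<noteq> y
  (0 is included so that the value is 0 for the trivial space).\<close>
definition lipnorm :: "('a::real_normed_vector \<Rightarrow> 'b::real_normed_vector) \<Rightarrow> real" where
  "lipnorm f = Sup (insert 0 {norm (f x - f y) / norm (x - y) | x y. x \<noteq> y})"

definition Lip0 :: "('a::real_normed_vector \<Rightarrow> 'b::real_normed_vector) set" where
  "Lip0 = {f. f 0 = 0 \<and> (\<exists>C. lipschitz_on C UNIV f)}"

text \<open>Elements of L(Lip_0(X,Y),Y): maps (('a \<Rightarrow> 'b) \<Rightarrow> 'b), linear and bounded on Lip0,
  normalised to be 0 outside Lip0 (so that equality of operators is extensional).\<close>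
definition bl_lip :: "(('a::real_normed_vector \<Rightarrow> 'b::real_normed_vector) \<Rightarrow> 'b) \<Rightarrow> bool" where
  "bl_lip \<Phi> \<longleftrightarrow>
     (\<forall>f\<in>Lip0. \<forall>g\<in>Lip0. \<Phi> (\<lambda>x. f x + g x) = \<Phi> f + \<Phi> g) \<and>
     (\<forall>c. \<forall>f\<in>Lip0. \<Phi> (\<lambda>x. c *\<^sub>R f x) = c *\<^sub>R \<Phi> f) \<and>
     (\<exists>K. \<forall>f\<in>Lip0. norm (\<Phi> f) \<le> K * lipnorm f) \<and>
     (\<forall>f. f \<notin> Lip0 \<longrightarrow> \<Phi> f = 0)"

definition opnormL :: "(('a::real_normed_vector \<Rightarrow> 'b::real_normed_vector) \<Rightarrow> 'b) \<Rightarrow> real" where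
  "opnormL \<Phi> = Sup {norm (\<Phi> f) | f. f \<in> Lip0 \<and> lipnorm f \<le> 1}"

definition delta :: "'a::real_normed_vector \<Rightarrow> ('a \<Rightarrow> 'b::real_normed_vector) \<Rightarrow> 'b" where
  "delta x = (\<lambda>f. if f \<in> Lip0 then f x else 0)"

definition span_delta :: "((('a::real_normed_vector) \<Rightarrow> 'b::real_normed_vector) \<Rightarrow> 'b) set" where
  "span_delta = {\<Phi>. \<exists>(n::nat) c p. \<Phi> = (\<lambda>f. \<Sum>i<n. c i *\<^sub>R delta (p i) f)}"

definition FY :: "((('a::real_normed_vector) \<Rightarrow> 'b::real_normed_vector) \<Rightarrow> 'b) set" where
  "FY = {\<Phi>. bl_lip \<Phi> \<and>
     (\<exists>S. (\<forall>n. S n \<in> span_delta) \<and> (\<lambda>n. opnormL (\<lambda>f. S n f - \<Phi> f)) \<longlonglongrightarrow> 0)}"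

definition bl_F :: "((('a::real_normed_vector \<Rightarrow> 'b::real_normed_vector) \<Rightarrow> 'b) \<Rightarrow> 'b) \<Rightarrow> bool" where
  "bl_F T \<longleftrightarrow>
     (\<forall>\<Phi>\<in>FY. \<forall>\<Psi>\<in>FY. T (\<lambda>f. \<Phi> f + \<Psi> f) = T \<Phi> + T \<Psi>) \<and>
     (\<forall>c. \<forall>\<Phi>\<in>FY. T (\<lambda>f. c *\<^sub>R \<Phi> f) = c *\<^sub>R T \<Phi>) \<and>
     (\<exists>K. \<forall>\<Phi>\<in>FY. norm (T \<Phi>) \<le> K * opnormL \<Phi>) \<and>
     (\<forall>\<Phi>. \<Phi> \<notin> FY \<longrightarrow> T \<Phi> = 0)"

definition opnormF :: "((('a::real_normed_vector \<Rightarrow> 'b::real_normed_vector) \<Rightarrow> 'b) \<Rightarrow> 'b) \<Rightarrow> real" where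
  "opnormF T = Sup {norm (T \<Phi>) | \<Phi>. \<Phi> \<in> FY \<and> opnormL \<Phi> \<le> 1}"

definition compdelta :: "((('a::real_normed_vector \<Rightarrow> 'b::real_normed_vector) \<Rightarrow> 'b) \<Rightarrow> 'b) \<Rightarrow> 'a \<Rightarrow> 'b" where
  "compdelta T = T \<circ> delta"

end

theory Submission
  imports Defs
begin

text \<open>The inverse of \<open>T \<mapsto> T \<circ> \<delta>\<close> is evaluation \<open>g \<mapsto> (\<Phi> \<mapsto> \<Phi> g)\<close>, which has norm at most
  \<open>Lip(g)\<close> because \<open>|\<Phi> g| \<le> \<parallel>\<Phi>\<parallel> Lip(g)\<close>. Conversely \<open>\<parallel>\<delta>\<^sub>x - \<delta>\<^sub>y\<parallel> \<le> \<parallel>x - y\<parallel>\<close>, so \<open>T \<circ> \<delta>\<close> is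
  Lipschitz with constant \<open>\<parallel>T\<parallel>\<close>. Two bounded operators on \<open>F\<^sub>Y(X)\<close> that agree on every
  \<open>\<delta>\<^sub>x\<close> agree on the span of the evaluations and hence, by continuity, on its closure; so every
  \<open>T\<close> is evaluation at \<open>T \<circ> \<delta>\<close>, which yields bijectivity and the reverse norm inequality.\<close>

lemma Lip0I: "f 0 = 0 \<Longrightarrow> lipschitz_on C UNIV f \<Longrightarrow> f \<in> Lip0"
  unfolding Lip0_def by blast

lemma lipschitz_on_lipnorm:
  assumes "f \<in> Lip0"
  shows "lipschitz_on (lipnorm f) UNIV f"
proof -
  obtain C where C: "lipschitz_on C UNIV f"
    using assms unfolding Lip0_def by blast
  let ?Q = "insert 0 {norm (f x - f y) / norm (x - y) | x y. x \<noteq> y}"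
  have "bdd_above ?Q"
    using lipschitz_on_nonneg[OF C] lipschitz_on_normD[OF C]
    by (intro bdd_aboveI[of _ C]) (auto simp: divide_le_eq)
  then have quotient_le: "q \<le> lipnorm f" if "q \<in> ?Q" for q
    unfolding lipnorm_def using that by (rule cSup_upper[rotated])
  show ?thesis
  proof (rule lipschitz_onI)
    fix x y
    show "dist (f x) (f y) \<le> lipnorm f * dist x y"
      using quotient_le[of "norm (f x - f y) / norm (x - y)"]
      by (cases "x = y") (auto simp: dist_norm divide_le_eq)
  qed (use quotient_le in simp)
qed

lemma lipnorm_le: "lipschitz_on C UNIV f \<Longrightarrow> lipnorm f \<le> C"
  unfolding lipnorm_def
  by (intro cSup_least) (auto simp: divide_le_eq lipschitz_on_nonneg lipschitz_on_normD)

lemma lipnorm_nonneg: "f \<in> Lip0 \<Longrightarrow> 0 \<le> lipnorm f"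
  using lipschitz_on_lipnorm lipschitz_on_nonneg by blast

lemma Lip0_zero: "(\<lambda>x. 0) \<in> Lip0"
  using lipschitz_on_constant by (blast intro: Lip0I)

lemma Lip0_add: "f \<in> Lip0 \<Longrightarrow> g \<in> Lip0 \<Longrightarrow> (\<lambda>x. f x + g x) \<in> Lip0"
  unfolding Lip0_def by (auto intro: lipschitz_on_add)

lemma Lip0_scaleR: "f \<in> Lip0 \<Longrightarrow> (\<lambda>x. c *\<^sub>R f x) \<in> Lip0"
  unfolding Lip0_def by (auto intro: lipschitz_on_cmult)

lemma lipnorm_scaleR_le: "f \<in> Lip0 \<Longrightarrow> lipnorm (\<lambda>x. c *\<^sub>R f x) \<le> \<bar>c\<bar> * lipnorm f"
  by (intro lipnorm_le lipschitz_on_cmult lipschitz_on_lipnorm)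

section \<open>Bounded operators on a gauged function space\<close>

text \<open>\<^const>\<open>bl_lip\<close>, \<^const>\<open>opnormL\<close> and \<^const>\<open>bl_F\<close>, \<^const>\<open>opnormF\<close> are the
  instances \<open>(Lip0, lipnorm)\<close> and \<open>(FY, opnormL)\<close> of the following two notions.\<close>

definition bounded_linear_on ::
    "('c \<Rightarrow> 'v::real_vector) set \<Rightarrow> (('c \<Rightarrow> 'v) \<Rightarrow> real) \<Rightarrow> (('c \<Rightarrow> 'v) \<Rightarrow> 'w::real_normed_vector) \<Rightarrow> bool"
  where "bounded_linear_on A N T \<longleftrightarrow>
     (\<forall>f\<in>A. \<forall>g\<in>A. T (\<lambda>x. f x + g x) = T f + T g) \<and>
     (\<forall>c. \<forall>f\<in>A. T (\<lambda>x. c *\<^sub>R f x) = c *\<^sub>R T f) \<and>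
     (\<exists>K. \<forall>f\<in>A. norm (T f) \<le> K * N f) \<and>
     (\<forall>f. f \<notin> A \<longrightarrow> T f = 0)"

definition opnorm_on :: "'f set \<Rightarrow> ('f \<Rightarrow> real) \<Rightarrow> ('f \<Rightarrow> 'w::real_normed_vector) \<Rightarrow> real"
  where "opnorm_on A N T = Sup {norm (T f) | f. f \<in> A \<and> N f \<le> 1}"

definition gauged_subspace :: "('c \<Rightarrow> 'v::real_vector) set \<Rightarrow> (('c \<Rightarrow> 'v) \<Rightarrow> real) \<Rightarrow> bool"
  where "gauged_subspace A N \<longleftrightarrow> (\<lambda>x. 0) \<in> A \<and>
     (\<forall>f\<in>A. \<forall>g\<in>A. (\<lambda>x. f x + g x) \<in> A) \<and>
     (\<forall>f\<in>A. 0 \<le> N f \<and> (\<forall>c. (\<lambda>x. c *\<^sub>R f x) \<in> A \<and> N (\<lambda>x. c *\<^sub>R f x) \<le> \<bar>c\<bar> * N f))"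

lemma bounded_linear_on_add_arg:
  "bounded_linear_on A N T \<Longrightarrow> f \<in> A \<Longrightarrow> g \<in> A \<Longrightarrow> T (\<lambda>x. f x + g x) = T f + T g"
  unfolding bounded_linear_on_def by blast

lemma bounded_linear_on_scaleR_arg:
  "bounded_linear_on A N T \<Longrightarrow> f \<in> A \<Longrightarrow> T (\<lambda>x. c *\<^sub>R f x) = c *\<^sub>R T f"
  unfolding bounded_linear_on_def by blast

lemma bounded_linear_on_outside: "bounded_linear_on A N T \<Longrightarrow> f \<notin> A \<Longrightarrow> T f = 0"
  unfolding bounded_linear_on_def by blast

lemma bounded_linear_on_zero: "bounded_linear_on A N (\<lambda>f. 0)"
  unfolding bounded_linear_on_def by (auto intro: exI[of _ 0])

context
  fixes A :: "('c \<Rightarrow> 'v::real_vector) set" and N :: "('c \<Rightarrow> 'v) \<Rightarrow> real"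
  assumes gauge: "gauged_subspace A N"
begin

lemma gauged_subspace_zero: "(\<lambda>x. 0) \<in> A"
  and gauged_subspace_add: "f \<in> A \<Longrightarrow> g \<in> A \<Longrightarrow> (\<lambda>x. f x + g x) \<in> A"
  and gauged_subspace_nonneg: "f \<in> A \<Longrightarrow> 0 \<le> N f"
  using gauge unfolding gauged_subspace_def by blast+

lemma gauged_subspace_scaleR: "f \<in> A \<Longrightarrow> (\<lambda>x. c *\<^sub>R f x) \<in> A"
  and gauged_subspace_scaleR_le: "f \<in> A \<Longrightarrow> N (\<lambda>x. c *\<^sub>R f x) \<le> \<bar>c\<bar> * N f"
  using gauge unfolding gauged_subspace_def by blast+

lemma gauged_subspace_unit_ball_nonempty: obtains f where "f \<in> A" "N f \<le> 1"
  using that[OF gauged_subspace_zero] gauged_subspace_scaleR_le[OF gauged_subspace_zero, of 0]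
  by simp

lemma bounded_linear_on_bound_nonneg:
  assumes "bounded_linear_on A N T"
  obtains K where "0 \<le> K" "\<And>f. f \<in> A \<Longrightarrow> norm (T f) \<le> K * N f"
proof -
  obtain K where K: "\<And>f. f \<in> A \<Longrightarrow> norm (T f) \<le> K * N f"
    using assms unfolding bounded_linear_on_def by blast
  have "K * N f \<le> max K 0 * N f" if "f \<in> A" for f
    using gauged_subspace_nonneg[OF that] by (intro mult_right_mono) auto
  then show thesis
    using that[of "max K 0"] K by force
qed

lemma norm_le_opnorm_on_unit:
  assumes "bounded_linear_on A N T" "f \<in> A" "N f \<le> 1"
  shows "norm (T f) \<le> opnorm_on A N T"
proof -
  obtain K where "0 \<le> K" "\<And>f. f \<in> A \<Longrightarrow> norm (T f) \<le> K * N f"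
    using bounded_linear_on_bound_nonneg[OF assms(1)] by blast
  then have "bdd_above {norm (T f) | f. f \<in> A \<and> N f \<le> 1}"
    by (intro bdd_aboveI[of _ K]) (force intro: order_trans mult_left_le)
  then show ?thesis
    unfolding opnorm_on_def using assms(2,3) by (auto intro: cSup_upper)
qed

lemma opnorm_on_le:
  assumes "\<And>f. f \<in> A \<Longrightarrow> N f \<le> 1 \<Longrightarrow> norm (T f) \<le> C"
  shows "opnorm_on A N T \<le> C"
  unfolding opnorm_on_def
  by (rule cSup_least) (use assms gauged_subspace_unit_ball_nonempty in blast)+

lemma opnorm_on_nonneg: "bounded_linear_on A N T \<Longrightarrow> 0 \<le> opnorm_on A N T"
  by (metis gauged_subspace_unit_ball_nonempty norm_ge_zero norm_le_opnorm_on_unit order.trans)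

lemma norm_le_opnorm_on:
  assumes T: "bounded_linear_on A N T" and f: "f \<in> A"
  shows "norm (T f) \<le> opnorm_on A N T * N f"
proof (cases "N f = 0")
  case True
  obtain K where "\<And>f. f \<in> A \<Longrightarrow> norm (T f) \<le> K * N f"
    using bounded_linear_on_bound_nonneg[OF T] by blast
  then show ?thesis using f True by force
next
  case False
  then have pos: "0 < N f" using gauged_subspace_nonneg[OF f] by simp
  let ?h = "\<lambda>x. (1 / N f) *\<^sub>R f x"
  have h: "?h \<in> A" "N ?h \<le> 1"
    using gauged_subspace_scaleR[OF f] gauged_subspace_scaleR_le[OF f, of "1 / N f"] pos by auto
  have "T f = N f *\<^sub>R T ?h"
    using bounded_linear_on_scaleR_arg[OF T f, of "1 / N f"] pos by simp
  then have "norm (T f) = N f * norm (T ?h)" using pos by simp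
  also have "\<dots> \<le> N f * opnorm_on A N T"
    using norm_le_opnorm_on_unit[OF T h] pos by simp
  finally show ?thesis by (simp add: mult.commute)
qed

lemma bounded_linear_on_add:
  assumes T: "bounded_linear_on A N T" and S: "bounded_linear_on A N S"
  shows "bounded_linear_on A N (\<lambda>f. T f + S f)"
proof -
  obtain K L where "\<And>f. f \<in> A \<Longrightarrow> norm (T f) \<le> K * N f" "\<And>f. f \<in> A \<Longrightarrow> norm (S f) \<le> L * N f"
    using bounded_linear_on_bound_nonneg[OF T] bounded_linear_on_bound_nonneg[OF S] by metis
  then have "\<forall>f\<in>A. norm (T f + S f) \<le> (K + L) * N f"
    by (auto simp: distrib_right intro: norm_triangle_le add_mono)
  then show ?thesis
    using T S unfolding bounded_linear_on_def by (auto simp: scaleR_add_right)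
qed

lemma bounded_linear_on_scaleR:
  assumes T: "bounded_linear_on A N T"
  shows "bounded_linear_on A N (\<lambda>f. c *\<^sub>R T f)"
proof -
  obtain K where "0 \<le> K" "\<And>f. f \<in> A \<Longrightarrow> norm (T f) \<le> K * N f"
    using bounded_linear_on_bound_nonneg[OF T] by blast
  then have "\<forall>f\<in>A. norm (c *\<^sub>R T f) \<le> (\<bar>c\<bar> * K) * N f"
    by (simp add: mult.assoc mult_left_mono)
  then show ?thesis
    using T unfolding bounded_linear_on_def by (auto simp: scaleR_add_right)
qed

lemma bounded_linear_on_diff:
  assumes "bounded_linear_on A N T" "bounded_linear_on A N S"
  shows "bounded_linear_on A N (\<lambda>f. T f - S f)"
  using bounded_linear_on_add[OF assms(1) bounded_linear_on_scaleR[OF assms(2), of "-1"]] by simp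

lemma bounded_linear_on_diff_arg:
  assumes T: "bounded_linear_on A N T" and "f \<in> A" "g \<in> A"
  shows "T (\<lambda>x. f x - g x) = T f - T g"
  using bounded_linear_on_add_arg[OF T \<open>f \<in> A\<close> gauged_subspace_scaleR[OF \<open>g \<in> A\<close>, of "-1"]]
    bounded_linear_on_scaleR_arg[OF T \<open>g \<in> A\<close>, of "-1"]
  by simp

lemma bounded_linear_on_zero_arg:
  assumes "bounded_linear_on A N T"
  shows "T (\<lambda>x. 0) = 0"
  using bounded_linear_on_scaleR_arg[OF assms gauged_subspace_zero, of 0] by simp

lemma gauged_subspace_diff: "f \<in> A \<Longrightarrow> g \<in> A \<Longrightarrow> (\<lambda>x. f x - g x) \<in> A"
  using gauged_subspace_add[OF _ gauged_subspace_scaleR, of f g "-1"] by simp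

lemma opnorm_on_add_le:
  assumes "bounded_linear_on A N T" "bounded_linear_on A N S"
  shows "opnorm_on A N (\<lambda>f. T f + S f) \<le> opnorm_on A N T + opnorm_on A N S"
  using assms by (intro opnorm_on_le norm_triangle_le add_mono norm_le_opnorm_on_unit)

lemma opnorm_on_scaleR_le:
  assumes "bounded_linear_on A N T"
  shows "opnorm_on A N (\<lambda>f. c *\<^sub>R T f) \<le> \<bar>c\<bar> * opnorm_on A N T"
  using norm_le_opnorm_on_unit[OF assms] by (intro opnorm_on_le) (simp add: mult_left_mono)

lemma opnorm_on_zero: "opnorm_on A N (\<lambda>f. 0 :: 'w::real_normed_vector) = 0"
  by (intro antisym opnorm_on_le opnorm_on_nonneg bounded_linear_on_zero) simp

lemma tendsto_opnorm_on_zero: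
  assumes "\<And>n. bounded_linear_on A N (E n)" "\<And>n. opnorm_on A N (E n) \<le> B n" "B \<longlonglongrightarrow> 0"
  shows "(\<lambda>n. opnorm_on A N (E n)) \<longlonglongrightarrow> 0"
  by (rule tendsto_sandwich[OF _ _ tendsto_const assms(3)]) (simp_all add: assms opnorm_on_nonneg)

lemma bounded_linear_on_eq_limit:
  assumes T: "bounded_linear_on A N T" and S: "bounded_linear_on A N S"
    and f: "f \<in> A" and Q: "\<And>n. Q n \<in> A" "\<And>n. T (Q n) = S (Q n)"
    and lim: "(\<lambda>n. N (\<lambda>x. Q n x - f x)) \<longlonglongrightarrow> 0"
  shows "T f = S f"
proof -
  let ?C = "opnorm_on A N T + opnorm_on A N S"
  have "norm (T f - S f) \<le> ?C * N (\<lambda>x. Q n x - f x)" for n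
  proof -
    have d: "(\<lambda>x. Q n x - f x) \<in> A"
      using Q(1) f by (rule gauged_subspace_diff)
    have "T f - S f = S (\<lambda>x. Q n x - f x) - T (\<lambda>x. Q n x - f x)"
      using bounded_linear_on_diff_arg[OF T Q(1) f] bounded_linear_on_diff_arg[OF S Q(1) f] Q(2)
      by simp
    also have "norm \<dots> \<le> ?C * N (\<lambda>x. Q n x - f x)"
      using norm_le_opnorm_on[OF T d] norm_le_opnorm_on[OF S d]
      by (auto simp: distrib_right intro: norm_triangle_le_diff)
    finally show ?thesis .
  qed
  moreover have "(\<lambda>n. ?C * N (\<lambda>x. Q n x - f x)) \<longlonglongrightarrow> 0"
    using tendsto_mult_right_zero[OF lim] .
  ultimately have "norm (T f - S f) \<le> 0"
    by (intro LIMSEQ_le_const[of "\<lambda>n. ?C * N (\<lambda>x. Q n x - f x)"]) auto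
  then show ?thesis by simp
qed

end

section \<open>The space \<open>F\<^sub>Y(X)\<close>\<close>

lemma bl_lip_eq: "bl_lip = bounded_linear_on Lip0 lipnorm"
  unfolding bl_lip_def bounded_linear_on_def ..

lemma opnormL_eq: "opnormL = opnorm_on Lip0 lipnorm"
  unfolding opnormL_def opnorm_on_def ..

lemma bl_F_eq: "bl_F = bounded_linear_on FY opnormL"
  unfolding bl_F_def bounded_linear_on_def ..

lemma opnormF_eq: "opnormF = opnorm_on FY opnormL"
  unfolding opnormF_def opnorm_on_def ..

lemma gauged_subspace_Lip0: "gauged_subspace Lip0 lipnorm"
  unfolding gauged_subspace_def
  by (auto simp: Lip0_zero Lip0_add Lip0_scaleR lipnorm_nonneg lipnorm_scaleR_le)

lemma bl_lip_delta: "bl_lip (delta x)"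
proof -
  have "norm (f x) \<le> norm x * lipnorm f" if "f \<in> Lip0" for f :: "'a \<Rightarrow> 'b"
    using lipschitz_on_normD[OF lipschitz_on_lipnorm[OF that], of x 0] that
    by (simp add: Lip0_def mult.commute)
  then show ?thesis
    unfolding bl_lip_def delta_def by (auto simp: Lip0_add Lip0_scaleR)
qed

lemma span_deltaI: "(\<lambda>f. \<Sum>i<(n::nat). c i *\<^sub>R delta (p i) f) \<in> span_delta"
  unfolding span_delta_def by blast

lemma bl_lip_span_delta: "\<Phi> \<in> span_delta \<Longrightarrow> bl_lip \<Phi>"
proof -
  have "bl_lip (\<lambda>f. \<Sum>i<n. c i *\<^sub>R delta (p i) f)" for n :: nat and c p
  proof (induction n)
    case 0
    show ?case by (simp add: bl_lip_eq bounded_linear_on_zero)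
  next
    case (Suc n)
    then show ?case
      using bl_lip_delta[of "p n"] unfolding bl_lip_eq
      by (auto intro!: bounded_linear_on_add[OF gauged_subspace_Lip0]
          bounded_linear_on_scaleR[OF gauged_subspace_Lip0])
  qed
  then show "\<Phi> \<in> span_delta \<Longrightarrow> bl_lip \<Phi>"
    unfolding span_delta_def by blast
qed

lemma span_delta_add_delta:
  assumes "\<Phi> \<in> span_delta"
  shows "(\<lambda>f. \<Phi> f + c *\<^sub>R delta x f) \<in> span_delta"
proof -
  obtain n :: nat and d p where \<Phi>: "\<Phi> = (\<lambda>f. \<Sum>i<n. d i *\<^sub>R delta (p i) f)"
    using assms unfolding span_delta_def by blast
  have "(\<lambda>f. \<Phi> f + c *\<^sub>R delta x f) = (\<lambda>f. \<Sum>i<Suc n. (d(n := c)) i *\<^sub>R delta ((p(n := x)) i) f)"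
    unfolding \<Phi> by (auto intro!: sum.cong)
  then show ?thesis
    by (simp only: span_deltaI)
qed

lemma span_delta_add:
  assumes "\<Phi> \<in> span_delta" "\<Psi> \<in> span_delta"
  shows "(\<lambda>f. \<Phi> f + \<Psi> f) \<in> span_delta"
proof -
  have "(\<lambda>f. \<Phi> f + (\<Sum>i<m. c i *\<^sub>R delta (p i) f)) \<in> span_delta" for m :: nat and c p
  proof (induction m)
    case 0
    show ?case using assms(1) by simp
  next
    case (Suc m)
    show ?case
      using span_delta_add_delta[OF Suc, of "c m" "p m"] by (simp add: add.assoc)
  qed
  then show ?thesis
    using assms(2) unfolding span_delta_def by blast
qed

lemma span_delta_scaleR:
  assumes "\<Phi> \<in> span_delta"
  shows "(\<lambda>f. c *\<^sub>R \<Phi> f) \<in> span_delta"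
proof -
  obtain n :: nat and d p where "\<Phi> = (\<lambda>f. \<Sum>i<n. d i *\<^sub>R delta (p i) f)"
    using assms unfolding span_delta_def by blast
  then have "(\<lambda>f. c *\<^sub>R \<Phi> f) = (\<lambda>f. \<Sum>i<n. (c * d i) *\<^sub>R delta (p i) f)"
    by (simp add: scaleR_sum_right)
  then show ?thesis
    by (simp only: span_deltaI)
qed

lemma span_delta_subset_FY: "span_delta \<subseteq> FY"
proof
  fix \<Phi> :: "('a \<Rightarrow> 'b) \<Rightarrow> 'b"
  assume "\<Phi> \<in> span_delta"
  moreover have "opnormL (\<lambda>f. \<Phi> f - \<Phi> f) = 0"
    by (simp add: opnormL_eq opnorm_on_zero[OF gauged_subspace_Lip0])
  ultimately show "\<Phi> \<in> FY"
    unfolding FY_def using bl_lip_span_delta by (auto intro!: exI[of _ "\<lambda>n. \<Phi>"])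
qed

lemma delta_in_FY: "delta x \<in> FY"
proof -
  have "delta x \<in> span_delta"
    using span_deltaI[where n = "Suc 0" and c = "\<lambda>i. 1" and p = "\<lambda>i. x"] by simp
  then show ?thesis
    using span_delta_subset_FY by blast
qed

lemma bounded_linear_on_FY: "\<Phi> \<in> FY \<Longrightarrow> bounded_linear_on Lip0 lipnorm \<Phi>"
  unfolding FY_def bl_lip_eq by blast

lemma bounded_linear_on_span_delta: "\<Phi> \<in> span_delta \<Longrightarrow> bounded_linear_on Lip0 lipnorm \<Phi>"
  using bl_lip_span_delta unfolding bl_lip_eq by blast

lemma FY_add:
  assumes "\<Phi> \<in> FY" "\<Psi> \<in> FY"
  shows "(\<lambda>f. \<Phi> f + \<Psi> f) \<in> FY"
proof -
  obtain S where S: "\<And>n. S n \<in> span_delta" "(\<lambda>n. opnormL (\<lambda>f. S n f - \<Phi> f)) \<longlonglongrightarrow> 0"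
    using assms(1) unfolding FY_def by blast
  obtain R where R: "\<And>n. R n \<in> span_delta" "(\<lambda>n. opnormL (\<lambda>f. R n f - \<Psi> f)) \<longlonglongrightarrow> 0"
    using assms(2) unfolding FY_def by blast
  have E: "bounded_linear_on Lip0 lipnorm (\<lambda>f. S n f - \<Phi> f)"
    "bounded_linear_on Lip0 lipnorm (\<lambda>f. R n f - \<Psi> f)" for n
    using assms S(1) R(1)
    by (simp_all add: bounded_linear_on_diff[OF gauged_subspace_Lip0] bounded_linear_on_FY
        bounded_linear_on_span_delta)
  have "(\<lambda>f. (S n f + R n f) - (\<Phi> f + \<Psi> f)) = (\<lambda>f. (S n f - \<Phi> f) + (R n f - \<Psi> f))" for n
    by (simp add: fun_eq_iff algebra_simps)
  then have "(\<lambda>n. opnormL (\<lambda>f. (S n f + R n f) - (\<Phi> f + \<Psi> f))) \<longlonglongrightarrow> 0"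
    using E tendsto_add_zero[OF S(2) R(2)] unfolding opnormL_eq
    by (intro tendsto_opnorm_on_zero[OF gauged_subspace_Lip0])
      (simp_all add: bounded_linear_on_add[OF gauged_subspace_Lip0]
        opnorm_on_add_le[OF gauged_subspace_Lip0])
  moreover have "bl_lip (\<lambda>f. \<Phi> f + \<Psi> f)"
    using assms unfolding bl_lip_eq
    by (intro bounded_linear_on_add gauged_subspace_Lip0 bounded_linear_on_FY)
  ultimately show ?thesis
    unfolding FY_def using S(1) R(1) span_delta_add
    by (intro CollectI conjI exI[of _ "\<lambda>n f. S n f + R n f"]) auto
qed

lemma FY_scaleR:
  assumes "\<Phi> \<in> FY"
  shows "(\<lambda>f. c *\<^sub>R \<Phi> f) \<in> FY"
proof -
  obtain S where S: "\<And>n. S n \<in> span_delta" "(\<lambda>n. opnormL (\<lambda>f. S n f - \<Phi> f)) \<longlonglongrightarrow> 0"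
    using assms unfolding FY_def by blast
  have E: "bounded_linear_on Lip0 lipnorm (\<lambda>f. S n f - \<Phi> f)" for n
    using assms S(1)
    by (simp add: bounded_linear_on_diff[OF gauged_subspace_Lip0] bounded_linear_on_FY
        bounded_linear_on_span_delta)
  have "(\<lambda>f. c *\<^sub>R S n f - c *\<^sub>R \<Phi> f) = (\<lambda>f. c *\<^sub>R (S n f - \<Phi> f))" for n
    by (simp add: fun_eq_iff algebra_simps)
  then have "(\<lambda>n. opnormL (\<lambda>f. c *\<^sub>R S n f - c *\<^sub>R \<Phi> f)) \<longlonglongrightarrow> 0"
    using E tendsto_mult_right_zero[OF S(2), of "\<bar>c\<bar>"] unfolding opnormL_eq
    by (intro tendsto_opnorm_on_zero[OF gauged_subspace_Lip0])
      (simp_all add: bounded_linear_on_scaleR[OF gauged_subspace_Lip0]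
        opnorm_on_scaleR_le[OF gauged_subspace_Lip0])
  moreover have "bl_lip (\<lambda>f. c *\<^sub>R \<Phi> f)"
    using assms unfolding bl_lip_eq
    by (intro bounded_linear_on_scaleR gauged_subspace_Lip0 bounded_linear_on_FY)
  ultimately show ?thesis
    unfolding FY_def using S(1) span_delta_scaleR
    by (intro CollectI conjI exI[of _ "\<lambda>n f. c *\<^sub>R S n f"]) auto
qed

lemma gauged_subspace_FY: "gauged_subspace FY opnormL"
  unfolding gauged_subspace_def
proof (intro conjI ballI allI)
  show "(\<lambda>f. 0) \<in> FY"
    using span_delta_subset_FY span_deltaI[where n = 0] by auto
  fix \<Phi> c assume "\<Phi> \<in> FY"
  then have "bounded_linear_on Lip0 lipnorm \<Phi>"
    by (rule bounded_linear_on_FY)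
  then show "0 \<le> opnormL \<Phi>" "opnormL (\<lambda>f. c *\<^sub>R \<Phi> f) \<le> \<bar>c\<bar> * opnormL \<Phi>"
    unfolding opnormL_eq
    by (simp_all add: opnorm_on_nonneg[OF gauged_subspace_Lip0]
        opnorm_on_scaleR_le[OF gauged_subspace_Lip0])
qed (simp_all add: FY_add FY_scaleR)

section \<open>The isomorphism\<close>

definition eval_op :: "('a::real_normed_vector \<Rightarrow> 'b::real_normed_vector) \<Rightarrow> (('a \<Rightarrow> 'b) \<Rightarrow> 'b) \<Rightarrow> 'b"
  where "eval_op g = (\<lambda>\<Phi>. if \<Phi> \<in> FY then \<Phi> g else 0)"

lemma bl_F_eval_op:
  assumes g: "g \<in> Lip0"
  shows "bl_F (eval_op g)"
proof -
  have "norm (\<Phi> g) \<le> lipnorm g * opnormL \<Phi>" if "\<Phi> \<in> FY" for \<Phi>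
    using norm_le_opnorm_on[OF gauged_subspace_Lip0 bounded_linear_on_FY[OF that] g]
    by (simp add: opnormL_eq mult.commute)
  then show ?thesis
    unfolding bl_F_eq bounded_linear_on_def eval_op_def by (auto simp: FY_add FY_scaleR)
qed

lemma compdelta_eval_op: "g \<in> Lip0 \<Longrightarrow> compdelta (eval_op g) = g"
  by (simp add: fun_eq_iff compdelta_def eval_op_def delta_in_FY) (simp add: delta_def)

lemma bl_F_apply_span_delta:
  assumes T: "bl_F T"
  shows "T (\<lambda>f. \<Sum>i<(n::nat). c i *\<^sub>R delta (p i) f) = (\<Sum>i<n. c i *\<^sub>R T (delta (p i)))"
proof (induction n)
  case 0
  show ?case
    using T by (simp add: bl_F_eq bounded_linear_on_zero_arg[OF gauged_subspace_FY])
next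
  case (Suc n)
  have sum: "(\<lambda>f. \<Sum>i<n. c i *\<^sub>R delta (p i) f) \<in> FY"
    using span_deltaI span_delta_subset_FY by blast
  have summand: "(\<lambda>f. c n *\<^sub>R delta (p n) f) \<in> FY"
    by (simp add: FY_scaleR delta_in_FY)
  from T have T': "bounded_linear_on FY opnormL T"
    by (simp add: bl_F_eq)
  show ?case
    using Suc bounded_linear_on_add_arg[OF T' sum summand]
      bounded_linear_on_scaleR_arg[OF T' delta_in_FY] by simp
qed

lemma bl_F_eqI:
  assumes T: "bl_F T" and S: "bl_F S" and deltas: "\<And>x. T (delta x) = S (delta x)"
  shows "T = S"
proof
  fix \<Phi> :: "('a \<Rightarrow> 'b) \<Rightarrow> 'b"
  show "T \<Phi> = S \<Phi>"
  proof (cases "\<Phi> \<in> FY")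
    case False
    then show ?thesis
      using T S by (simp add: bl_F_eq bounded_linear_on_outside)
  next
    case True
    then obtain Q where Q: "\<And>n. Q n \<in> span_delta" "(\<lambda>n. opnormL (\<lambda>f. Q n f - \<Phi> f)) \<longlonglongrightarrow> 0"
      unfolding FY_def by blast
    have "T (Q n) = S (Q n)" for n
      using Q(1)[of n] bl_F_apply_span_delta[OF T] bl_F_apply_span_delta[OF S] deltas
      unfolding span_delta_def by auto
    moreover have "Q n \<in> FY" for n
      using Q(1) span_delta_subset_FY by blast
    ultimately show ?thesis
      using T S True Q(2) unfolding bl_F_eq
      by (intro bounded_linear_on_eq_limit[OF gauged_subspace_FY, of T S \<Phi> Q])
  qed
qed

lemma opnormL_delta_diff_le: "opnormL (\<lambda>f. delta x f - delta y f) \<le> norm (x - y)"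
  unfolding opnormL_eq
proof (rule opnorm_on_le[OF gauged_subspace_Lip0])
  fix f :: "'a \<Rightarrow> 'b"
  assume "f \<in> Lip0" "lipnorm f \<le> 1"
  then show "norm (delta x f - delta y f) \<le> norm (x - y)"
    using lipschitz_on_normD[OF lipschitz_on_lipnorm, of f x y]
      mult_right_mono[of "lipnorm f" 1 "norm (x - y)"]
    by (simp add: delta_def)
qed

lemma lipschitz_on_compdelta:
  fixes T :: "(('a::real_normed_vector \<Rightarrow> 'b::real_normed_vector) \<Rightarrow> 'b) \<Rightarrow> 'b"
  assumes T: "bl_F T"
  shows "lipschitz_on (opnormF T) UNIV (compdelta T)"
proof (rule lipschitz_onI)
  show "0 \<le> opnormF T"
    using T unfolding bl_F_eq opnormF_eq by (rule opnorm_on_nonneg[OF gauged_subspace_FY])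
  fix x y :: 'a
  have "compdelta T x - compdelta T y = T (\<lambda>f. delta x f - delta y f)"
    using T unfolding bl_F_eq compdelta_def
    by (simp add: bounded_linear_on_diff_arg[OF gauged_subspace_FY] delta_in_FY)
  also have "norm \<dots> \<le> opnormF T * opnormL (\<lambda>f :: 'a \<Rightarrow> 'b. delta x f - delta y f)"
    using T unfolding bl_F_eq opnormF_eq
    by (rule norm_le_opnorm_on[OF gauged_subspace_FY _
          gauged_subspace_diff[OF gauged_subspace_FY delta_in_FY delta_in_FY]])
  also have "\<dots> \<le> opnormF T * norm (x - y)"
    by (intro mult_left_mono opnormL_delta_diff_le \<open>0 \<le> opnormF T\<close>)
  finally show "dist (compdelta T x) (compdelta T y) \<le> opnormF T * dist x y"
    by (simp add: dist_norm)
qed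

lemma compdelta_in_Lip0:
  fixes T :: "(('a::real_normed_vector \<Rightarrow> 'b::real_normed_vector) \<Rightarrow> 'b) \<Rightarrow> 'b"
  assumes T: "bl_F T"
  shows "compdelta T \<in> Lip0"
proof (rule Lip0I[OF _ lipschitz_on_compdelta[OF T]])
  have "delta 0 = (\<lambda>f :: 'a \<Rightarrow> 'b. 0)"
    by (auto simp: delta_def Lip0_def)
  moreover have "T (\<lambda>f. 0) = 0"
    using T unfolding bl_F_eq by (rule bounded_linear_on_zero_arg[OF gauged_subspace_FY])
  ultimately show "compdelta T 0 = 0"
    by (simp add: compdelta_def)
qed

lemma eval_op_compdelta:
  assumes T: "bl_F T"
  shows "eval_op (compdelta T) = T"
proof (rule bl_F_eqI[OF bl_F_eval_op[OF compdelta_in_Lip0[OF T]] T])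
  fix x
  show "eval_op (compdelta T) (delta x) = T (delta x)"
    using compdelta_in_Lip0[OF T]
    by (simp add: eval_op_def delta_in_FY) (simp add: delta_def compdelta_def)
qed

lemma lipnorm_compdelta:
  fixes T :: "(('a::real_normed_vector \<Rightarrow> 'b::real_normed_vector) \<Rightarrow> 'b) \<Rightarrow> 'b"
  assumes T: "bl_F T"
  shows "lipnorm (compdelta T) = opnormF T"
proof (rule antisym)
  show "lipnorm (compdelta T) \<le> opnormF T"
    using lipschitz_on_compdelta[OF T] by (rule lipnorm_le)
  let ?g = "compdelta T"
  show "opnormF T \<le> lipnorm ?g"
    unfolding opnormF_eq
  proof (rule opnorm_on_le[OF gauged_subspace_FY])
    fix \<Phi> :: "('a \<Rightarrow> 'b) \<Rightarrow> 'b"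
    assume \<Phi>: "\<Phi> \<in> FY" "opnormL \<Phi> \<le> 1"
    have "T \<Phi> = eval_op ?g \<Phi>"
      by (simp add: eval_op_compdelta[OF T])
    then have "norm (T \<Phi>) = norm (\<Phi> ?g)"
      using \<Phi>(1) by (simp add: eval_op_def)
    also have "\<dots> \<le> opnormL \<Phi> * lipnorm ?g"
      unfolding opnormL_eq
      by (rule norm_le_opnorm_on[OF gauged_subspace_Lip0 bounded_linear_on_FY[OF \<Phi>(1)]
            compdelta_in_Lip0[OF T]])
    also have "\<dots> \<le> lipnorm ?g"
      using mult_right_mono[OF \<Phi>(2) lipnorm_nonneg[OF compdelta_in_Lip0[OF T]]] by simp
    finally show "norm (T \<Phi>) \<le> lipnorm ?g" .
  qed
qed

theorem mainTheorem9:
  fixes X_type :: "'a::banach itself" and Y_type :: "'b::banach itself"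
  shows "bij_betw (compdelta :: ((('a \<Rightarrow> 'b) \<Rightarrow> 'b) \<Rightarrow> 'b) \<Rightarrow> 'a \<Rightarrow> 'b)
            {T. bl_F T} Lip0
    \<and> (\<forall>T S c. bl_F T \<longrightarrow> bl_F S \<longrightarrow>
          (compdelta (\<lambda>\<Phi>. T \<Phi> + S \<Phi>) :: 'a \<Rightarrow> 'b) = (\<lambda>x. compdelta T x + compdelta S x)
        \<and> (compdelta (\<lambda>\<Phi>. c *\<^sub>R T \<Phi>) :: 'a \<Rightarrow> 'b) = (\<lambda>x. c *\<^sub>R compdelta T x))
    \<and> (\<forall>T. bl_F T \<longrightarrow> lipnorm (compdelta T :: 'a \<Rightarrow> 'b) = opnormF T)"
proof (intro conjI allI impI)
  show "bij_betw (compdelta :: ((('a \<Rightarrow> 'b) \<Rightarrow> 'b) \<Rightarrow> 'b) \<Rightarrow> 'a \<Rightarrow> 'b) {T. bl_F T} Lip0"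
    by (rule bij_betw_byWitness[where f' = eval_op])
      (use eval_op_compdelta compdelta_eval_op compdelta_in_Lip0 bl_F_eval_op in blast)+
next
  fix T :: "(('a \<Rightarrow> 'b) \<Rightarrow> 'b) \<Rightarrow> 'b"
  assume "bl_F T"
  then show "lipnorm (compdelta T) = opnormF T"
    by (rule lipnorm_compdelta)
qed (simp_all add: compdelta_def o_def)

end
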